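(* Let $S\in\mathcal{B}_A(\mathcal{H})$. Then $$\omega_A^4(S)\le\frac14\Big\|\big(S^{\sharp_A}S\big)^2+\big(SS^{\sharp_A}\big)^2\Big\|_A+\frac12\,\omega_A\big(S^{\sharp_A}S^2S^{\sharp_A}\big).$$
   Context: $\mathcal{H}$ is a complex Hilbert space with inner product $\langle\cdot,\cdot\rangle$, and $A$ is a fixed nonzero positive bounded operator on $\mathcal{H}$. Set $\langle x,y\rangle_A=\langle Ax,y\rangle$ and $\|x\|_A=\|A^{1/2}x\|$. $\mathcal{B}_A(\mathcal{H})$ is the set of bounded operators $T$ for which there exists a bounded $S$ with $\langle Tx,y\rangle_A=\langle x,Sy\rangle_A$ for all $x,y$ (equivalently $\mathcal{R}(T^*A)\subseteq\mathcal{R}(A)$). For $T\in\mathcal{B}_A(\mathcal{H})$, $T^{\sharp_A}=A^\dagger T^*A$ ($A^\dagger$ the Moore–Penrose inverse) is the reduced solution of $AX=T^*A$. For an operator $T$ with $\|Tx\|_A\le\lambda\|x\|_A$ for some $\lambda>0$ and all $x$, $\|T\|_A=\sup\{\|Tx\|_A: \|x\|_A=1\}$, and $\omega_A(T)=\sup\{|\langle Tx,x\rangle_A|:\|x\|_A=1\}$. *)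

theory Defs
  imports "HOL-Analysis.Analysis"
begin

class complex_inner = real_normed_vector +
  fixes scaleC :: "complex \<Rightarrow> 'a \<Rightarrow> 'a"
    and cinner :: "'a \<Rightarrow> 'a \<Rightarrow> complex"
  assumes scaleC_add_right: "scaleC a (x + y) = scaleC a x + scaleC a y"
    and scaleC_add_left: "scaleC (a + b) x = scaleC a x + scaleC b x"
    and scaleC_scaleC: "scaleC a (scaleC b x) = scaleC (a * b) x"
    and scaleC_one: "scaleC 1 x = x"
    and scaleR_scaleC: "scaleR r x = scaleC (of_real r) x"
    and cinner_conj: "cinner x y = cnj (cinner y x)"
    and cinner_add_left: "cinner (x + y) z = cinner x z + cinner y z"
    and cinner_scaleC_left: "cinner (scaleC a x) y = a * cinner x y"
    and cinner_self_real: "Im (cinner x x) = 0"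
    and cinner_self_nonneg: "0 \<le> Re (cinner x x)"
    and norm_cinner: "norm x = sqrt (Re (cinner x x))"

class complex_hilbert = complex_inner + complete_space

definition clinear :: "('a::complex_inner \<Rightarrow> 'b::complex_inner) \<Rightarrow> bool" where
  "clinear f \<longleftrightarrow> (\<forall>x y. f (x + y) = f x + f y) \<and> (\<forall>c x. f (scaleC c x) = scaleC c (f x))"

definition bounded_clinear :: "('a::complex_inner \<Rightarrow> 'b::complex_inner) \<Rightarrow> bool" where
  "bounded_clinear f \<longleftrightarrow> clinear f \<and> (\<exists>K. \<forall>x. norm (f x) \<le> norm x * K)"

text \<open>Hilbert adjoint T* (exists and is unique for bounded T on a Hilbert space).\<close>
definition cadjoint :: "('a::complex_inner \<Rightarrow> 'a) \<Rightarrow> ('a \<Rightarrow> 'a)" where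
  "cadjoint T = (SOME S. \<forall>x y. cinner (T x) y = cinner x (S y))"

definition positive_op :: "('a::complex_inner \<Rightarrow> 'a) \<Rightarrow> bool" where
  "positive_op A \<longleftrightarrow> bounded_clinear A \<and>
     (\<forall>x. Im (cinner (A x) x) = 0 \<and> 0 \<le> Re (cinner (A x) x))"

definition innerA :: "('a::complex_inner \<Rightarrow> 'a) \<Rightarrow> 'a \<Rightarrow> 'a \<Rightarrow> complex" where
  "innerA A x y = cinner (A x) y"

text \<open>norm_A x = norm (A^(1/2) x) = sqrt (Ax,x).\<close>
definition normA :: "('a::complex_inner \<Rightarrow> 'a) \<Rightarrow> 'a \<Rightarrow> real" where
  "normA A x = sqrt (Re (cinner (A x) x))"

definition BA :: "('a::complex_inner \<Rightarrow> 'a) \<Rightarrow> ('a \<Rightarrow> 'a) \<Rightarrow> bool" where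
  "BA A T \<longleftrightarrow> bounded_clinear T \<and>
     (\<exists>S. bounded_clinear S \<and> (\<forall>x y. innerA A (T x) y = innerA A x (S y)))"

text \<open>Moore--Penrose inverse of A, on its domain R(A) + R(A)-perp: the unique x in N(A)-perp
with A x - y in R(A)-perp  (i.e. A x = P_{closure R(A)} y).\<close>
definition mp_inv :: "('a::complex_inner \<Rightarrow> 'a) \<Rightarrow> 'a \<Rightarrow> 'a" where
  "mp_inv A y = (THE x. (\<forall>z. A z = 0 \<longrightarrow> cinner x z = 0) \<and> (\<forall>w. cinner (A x - y) (A w) = 0))"

definition sharpA :: "('a::complex_inner \<Rightarrow> 'a) \<Rightarrow> ('a \<Rightarrow> 'a) \<Rightarrow> ('a \<Rightarrow> 'a)" where
  "sharpA A T = mp_inv A \<circ> cadjoint T \<circ> A"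

definition opnormA :: "('a::complex_inner \<Rightarrow> 'a) \<Rightarrow> ('a \<Rightarrow> 'a) \<Rightarrow> real" where
  "opnormA A T = Sup {normA A (T x) | x. normA A x = 1}"

definition omegaA :: "('a::complex_inner \<Rightarrow> 'a) \<Rightarrow> ('a \<Rightarrow> 'a) \<Rightarrow> real" where
  "omegaA A T = Sup {cmod (innerA A (T x) x) | x. normA A x = 1}"

end

theory Submission
  imports Defs
begin

text \<open>Fix an A-unit vector x and write T for the A-adjoint of S. Cauchy--Schwarz for the
semi-inner product gives |<Sx,x>|^4 <= |Sx|^2 |Tx|^2 = |<TSx,x> <x,STx>|, and Buzano's
inequality bounds this by (|TSx| |STx| + |<TSx,STx>|)/2. By AM--GM the first term is at most
(|TSx|^2 + |STx|^2)/2 = Re <(TSTS + STST)x, x>/2 <= |(TSTS + STST)x|/2, while the second term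
equals |<TSSTx,x>|.

The suprema are finite because an operator with a bounded A-adjoint is A-bounded: for the
A-selfadjoint R = TS, iterating Cauchy--Schwarz gives |Rz|^(2^k) <= |R^(2^k) z| for A-unit z,
and the right-hand side grows at most like the 2^k-th power of the norm of R. The Hilbert
adjoint and the Moore--Penrose inverse on the range of A come from the projection theorem.\<close>

section \<open>Complex inner product spaces\<close>

context complex_inner
begin

lemma scaleC_zero_right [simp]: "scaleC a 0 = 0"
  using scaleC_add_right [of a 0 0] by simp

lemma cinner_add_right: "cinner x (y + z) = cinner x y + cinner x z"
  using cinner_conj [of x "y + z"] cinner_conj [of y x] cinner_conj [of z x]
  by (simp add: cinner_add_left)

lemma cinner_scaleC_right: "cinner x (scaleC a y) = cnj a * cinner x y"
  using cinner_conj [of x "scaleC a y"] cinner_conj [of y x] by (simp add: cinner_scaleC_left)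

lemma cinner_zero_left [simp]: "cinner 0 y = 0"
  using cinner_add_left [of 0 0 y] by simp

lemma cinner_zero_right [simp]: "cinner y 0 = 0"
  using cinner_conj [of y 0] by simp

lemma cinner_diff_left: "cinner (x - y) z = cinner x z - cinner y z"
  using cinner_add_left [of "x - y" y z] by simp

lemma cinner_diff_right: "cinner x (y - z) = cinner x y - cinner x z"
  using cinner_add_right [of x "y - z" z] by simp

lemma cinner_self: "cinner x x = of_real ((norm x)\<^sup>2)"
  by (simp add: complex_eq_iff norm_cinner cinner_self_real cinner_self_nonneg)

lemma cinner_self_eq_0 [simp]: "cinner x x = 0 \<longleftrightarrow> x = 0"
  by (simp add: cinner_self)

lemma cinner_eqI: "(\<And>x. cinner x u = cinner x v) \<Longrightarrow> u = v"
  using cinner_self_eq_0 [of "u - v"] by (simp add: cinner_diff_right)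

end

lemma cnj_mult_self: "cnj z * z = of_real ((cmod z)\<^sup>2)"
  by (metis complex_norm_square mult.commute)

lemma bounded_clinear_bounded_linear:
  assumes "bounded_clinear F"
  shows "bounded_linear F"
proof -
  from assms obtain K where "\<And>x. norm (F x) \<le> norm x * K"
    by (auto simp: bounded_clinear_def)
  with assms show ?thesis
    by (intro bounded_linear_intro [where K = K]) (auto simp: bounded_clinear_def clinear_def scaleR_scaleC)
qed

lemma bounded_clinear_scaleC: "bounded_clinear F \<Longrightarrow> F (scaleC c x) = scaleC c (F x)"
  by (simp add: bounded_clinear_def clinear_def)

lemma bounded_clinear_compose:
  assumes F: "bounded_clinear F" and G: "bounded_clinear G"
  shows "bounded_clinear (F \<circ> G)"
proof -
  have "bounded_linear (\<lambda>x. F (G x))"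
    using bounded_clinear_bounded_linear [OF F] bounded_clinear_bounded_linear [OF G]
    by (rule bounded_linear_compose)
  then obtain K where "\<And>x. norm (F (G x)) \<le> norm x * K"
    using bounded_linear.bounded by blast
  with F G show ?thesis
    unfolding bounded_clinear_def clinear_def by auto
qed

section \<open>The semi-inner product induced by a positive operator\<close>

locale positive_operator =
  fixes A :: "'a::complex_inner \<Rightarrow> 'a"
  assumes positive: "positive_op A"
begin

lemma bounded_linear_A: "bounded_linear A"
  using positive by (simp add: positive_op_def bounded_clinear_bounded_linear)

sublocale A: bounded_linear A
  by (rule bounded_linear_A)

lemma A_scaleC: "A (scaleC c x) = scaleC c (A x)"
  using positive by (simp add: positive_op_def bounded_clinear_scaleC)

lemma Im_cinner_A_self: "Im (cinner (A x) x) = 0"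
  using positive by (simp add: positive_op_def)

lemma Re_cinner_A_self_nonneg: "0 \<le> Re (cinner (A x) x)"
  using positive by (simp add: positive_op_def)

lemma selfadjoint: "cinner (A x) y = cinner x (A y)"
proof -
  \<comment> \<open>polarization: the quadratic form of A is real at x + y and at x + i y\<close>
  define a where "a = cinner (A x) y"
  define b where "b = cinner (A y) x"
  have "cinner (A (x + y)) (x + y) = cinner (A x) x + a + b + cinner (A y) y"
    by (simp add: A.add cinner_add_left cinner_add_right a_def b_def)
  then have "Im a + Im b = 0"
    using Im_cinner_A_self [of "x + y"] Im_cinner_A_self [of x] Im_cinner_A_self [of y] by simp
  moreover
  have "cinner (A (x + scaleC \<i> y)) (x + scaleC \<i> y)
      = cinner (A x) x + (- \<i>) * a + \<i> * b + cinner (A y) y"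
    by (simp add: A.add A_scaleC cinner_add_left cinner_add_right
        cinner_scaleC_left cinner_scaleC_right a_def b_def algebra_simps)
  then have "Re b - Re a = 0"
    using Im_cinner_A_self [of "x + scaleC \<i> y"] Im_cinner_A_self [of x] Im_cinner_A_self [of y]
    by simp
  ultimately have "a = cnj b"
    by (simp add: complex_eq_iff)
  also have "cnj b = cinner x (A y)"
    unfolding b_def by (rule cinner_conj [symmetric])
  finally show ?thesis
    unfolding a_def .
qed

lemma innerA_commute: "innerA A x y = cnj (innerA A y x)"
  unfolding innerA_def by (metis selfadjoint cinner_conj)

lemma innerA_add_left: "innerA A (x + y) z = innerA A x z + innerA A y z"
  by (simp add: innerA_def A.add cinner_add_left)

lemma innerA_add_right: "innerA A x (y + z) = innerA A x y + innerA A x z"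
  by (simp add: innerA_def cinner_add_right)

lemma innerA_diff_left: "innerA A (x - y) z = innerA A x z - innerA A y z"
  by (simp add: innerA_def A.diff cinner_diff_left)

lemma innerA_diff_right: "innerA A x (y - z) = innerA A x y - innerA A x z"
  by (simp add: innerA_def cinner_diff_right)

lemma innerA_scaleC_left: "innerA A (scaleC c x) y = c * innerA A x y"
  by (simp add: innerA_def A_scaleC cinner_scaleC_left)

lemma innerA_scaleC_right: "innerA A x (scaleC c y) = cnj c * innerA A x y"
  by (simp add: innerA_def cinner_scaleC_right)

lemma innerA_right_cong: "A u = A v \<Longrightarrow> innerA A x u = innerA A x v"
  by (simp add: innerA_def selfadjoint)

lemma normA_cong: "A u = A v \<Longrightarrow> normA A u = normA A v"
  using selfadjoint [of v u] selfadjoint [of v v] by (simp add: normA_def)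

lemma innerA_adjoint_swap:
  assumes "\<And>x y. innerA A (S x) y = innerA A x (T y)"
  shows "innerA A (T x) y = innerA A x (S y)"
  using innerA_commute [of "T x" y] innerA_commute [of x "S y"] assms [of y x] by simp

lemma normA_nonneg: "0 \<le> normA A x"
  using Re_cinner_A_self_nonneg [of x] by (simp add: normA_def)

lemma power2_normA: "(normA A x)\<^sup>2 = Re (innerA A x x)"
  using Re_cinner_A_self_nonneg [of x] by (simp add: normA_def innerA_def)

lemma innerA_self: "innerA A x x = of_real ((normA A x)\<^sup>2)"
  using Im_cinner_A_self [of x] by (simp add: power2_normA complex_eq_iff innerA_def)

lemma power2_normA_diff_scaleC:
  "(normA A (x - scaleC t y))\<^sup>2
    = (normA A x)\<^sup>2 - 2 * Re (cnj t * innerA A x y) + (cmod t)\<^sup>2 * (normA A y)\<^sup>2"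
proof -
  have "innerA A (x - scaleC t y) (x - scaleC t y)
      = innerA A x x - cnj t * innerA A x y - t * innerA A y x + t * cnj t * innerA A y y"
    by (simp add: innerA_diff_left innerA_diff_right innerA_scaleC_left innerA_scaleC_right algebra_simps)
  also have "\<dots> = innerA A x x - cnj t * innerA A x y - cnj (cnj t * innerA A x y)
      + of_real ((cmod t)\<^sup>2) * innerA A y y"
    using complex_norm_square [of t] by (simp add: innerA_commute [of y x])
  finally have expand: "innerA A (x - scaleC t y) (x - scaleC t y) = \<dots>" .
  show ?thesis
    unfolding power2_normA [of "x - scaleC t y"] expand
    using power2_normA [of x] innerA_self [of y] by simp
qed

lemma power2_normA_diff_real_multiple:
  "(normA A (x - scaleC (of_real s * innerA A x y) y))\<^sup>2
    = (normA A x)\<^sup>2 - 2 * s * (cmod (innerA A x y))\<^sup>2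
      + s\<^sup>2 * (cmod (innerA A x y))\<^sup>2 * (normA A y)\<^sup>2"
proof -
  let ?a = "innerA A x y"
  have "(normA A (x - scaleC (of_real s * ?a) y))\<^sup>2
      = (normA A x)\<^sup>2 - 2 * Re (cnj (of_real s * ?a) * ?a) + (cmod (of_real s * ?a))\<^sup>2 * (normA A y)\<^sup>2"
    by (rule power2_normA_diff_scaleC)
  also have "cnj (of_real s * ?a) * ?a = of_real (s * (cmod ?a)\<^sup>2)"
    by (simp only: complex_cnj_mult complex_cnj_complex_of_real mult.assoc cnj_mult_self of_real_mult)
  also have "(cmod (of_real s * ?a))\<^sup>2 = s\<^sup>2 * (cmod ?a)\<^sup>2"
    by (simp add: norm_mult power_mult_distrib)
  finally show ?thesis
    by (simp add: mult_ac)
qed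

lemma innerA_Cauchy_Schwarz: "cmod (innerA A x y) \<le> normA A x * normA A y"
proof -
  define a where "a = cmod (innerA A x y)"
  define p where "p = (normA A x)\<^sup>2"
  define q where "q = (normA A y)\<^sup>2"
  have q_nonneg: "0 \<le> q"
    unfolding q_def by simp
  have quadratic: "0 \<le> p - 2 * s * a\<^sup>2 + s\<^sup>2 * a\<^sup>2 * q" for s :: real
    unfolding a_def p_def q_def power2_normA_diff_real_multiple [symmetric] by simp
  have "a\<^sup>2 \<le> p * q"
  proof (cases "q = 0")
    case True
    show ?thesis
    proof (rule ccontr)
      assume "\<not> ?thesis"
      then have "0 < a\<^sup>2"
        using True by simp
      have "0 \<le> p - 2 * ((p + 1) / (2 * a\<^sup>2)) * a\<^sup>2"
        using quadratic [of "(p + 1) / (2 * a\<^sup>2)"] True by simp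
      also have "2 * ((p + 1) / (2 * a\<^sup>2)) * a\<^sup>2 = p + 1"
        using \<open>0 < a\<^sup>2\<close> by (simp add: field_simps)
      finally show False
        by simp
    qed
  next
    case False
    then have "0 < q"
      using q_nonneg by simp
    have "0 \<le> p - 2 * (1 / q) * a\<^sup>2 + (1 / q)\<^sup>2 * a\<^sup>2 * q"
      by (rule quadratic)
    also have "\<dots> = (p * q - a\<^sup>2) / q"
      using \<open>0 < q\<close> by (simp add: field_simps power2_eq_square)
    finally show ?thesis
      using \<open>0 < q\<close> by (simp add: zero_le_divide_iff)
  qed
  also have "p * q = (normA A x * normA A y)\<^sup>2"
    unfolding p_def q_def by (simp add: power_mult_distrib)
  finally show ?thesis
    unfolding a_def by (rule power2_le_imp_le) (simp add: normA_nonneg)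
qed

lemma normA_scaleC: "normA A (scaleC c x) = cmod c * normA A x"
proof -
  have "innerA A (scaleC c x) (scaleC c x) = (c * cnj c) * innerA A x x"
    by (simp add: innerA_scaleC_left innerA_scaleC_right mult_ac)
  also have "\<dots> = of_real ((cmod c)\<^sup>2 * (normA A x)\<^sup>2)"
    by (simp only: innerA_self complex_norm_square [symmetric] of_real_mult [symmetric])
  finally have "(normA A (scaleC c x))\<^sup>2 = (cmod c * normA A x)\<^sup>2"
    using power2_normA [of "scaleC c x"] by (simp add: power_mult_distrib)
  then show ?thesis
    using normA_nonneg by (metis norm_ge_zero power2_eq_iff_nonneg zero_le_mult_iff)
qed

lemma normA_normalize: "normA A x \<noteq> 0 \<Longrightarrow> normA A (scaleC (of_real (1 / normA A x)) x) = 1"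
  using normA_nonneg [of x] by (simp add: normA_scaleC norm_divide abs_of_nonneg)

lemma normA_triangle_ineq: "normA A (x + y) \<le> normA A x + normA A y"
proof -
  have "(normA A (x + y))\<^sup>2 = (normA A x)\<^sup>2 + (normA A y)\<^sup>2 + 2 * Re (innerA A x y)"
    using power2_normA [of "x + y"] power2_normA [of x] power2_normA [of y] innerA_commute [of y x]
    by (simp add: innerA_add_left innerA_add_right)
  also have "\<dots> \<le> (normA A x + normA A y)\<^sup>2"
    using innerA_Cauchy_Schwarz [of x y] complex_Re_le_cmod [of "innerA A x y"]
    by (simp add: power2_sum)
  finally show ?thesis
    using normA_nonneg by (meson add_nonneg_nonneg power2_le_imp_le)
qed

lemma ex_normA_eq_1:
  assumes "A \<noteq> (\<lambda>x. 0)"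
  shows "\<exists>x. normA A x = 1"
proof -
  obtain x where "A x \<noteq> 0"
    using assms by auto
  then have "innerA A x (A x) \<noteq> 0"
    by (simp add: innerA_def)
  then have "normA A x \<noteq> 0"
    using innerA_Cauchy_Schwarz [of x "A x"] by auto
  then show ?thesis
    using normA_normalize by blast
qed

lemma buzano_inequality:
  assumes e: "normA A e = 1"
  shows "2 * cmod (innerA A a e * innerA A e b) \<le> normA A a * normA A b + cmod (innerA A a b)"
proof -
  define c where "c = innerA A a e"
  \<comment> \<open>u is the reflection of a in the line spanned by e, hence has the same A-length\<close>
  define u where "u = scaleC (2 * c) e - a"
  have ee: "innerA A e e = 1"
    using innerA_self [of e] e by simp
  have ea: "innerA A e a = cnj c"
    unfolding c_def by (rule innerA_commute)
  have "innerA A u u = (2 * c) * cnj (2 * c) * innerA A e e - (2 * c) * innerA A e a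
      - cnj (2 * c) * innerA A a e + innerA A a a"
    unfolding u_def
    by (simp add: innerA_diff_left innerA_diff_right innerA_scaleC_left innerA_scaleC_right algebra_simps)
  also have "\<dots> = innerA A a a"
    unfolding ee ea c_def [symmetric] by (simp add: algebra_simps)
  finally have "(normA A u)\<^sup>2 = (normA A a)\<^sup>2"
    using power2_normA [of u] power2_normA [of a] by simp
  then have normA_u: "normA A u = normA A a"
    using normA_nonneg by (metis power2_eq_iff_nonneg)
  have "2 * cmod (c * innerA A e b) = cmod (innerA A u b + innerA A a b)"
    unfolding u_def by (simp add: innerA_diff_left innerA_scaleC_left norm_mult mult.assoc)
  also have "\<dots> \<le> cmod (innerA A u b) + cmod (innerA A a b)"
    by (rule norm_triangle_ineq)
  also have "cmod (innerA A u b) \<le> normA A a * normA A b"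
    using innerA_Cauchy_Schwarz [of u b] normA_u by simp
  finally show ?thesis
    unfolding c_def by simp
qed

end

lemma positive_operator_id: "positive_operator (id :: 'a::complex_inner \<Rightarrow> 'a)"
  unfolding positive_operator_def positive_op_def bounded_clinear_def clinear_def
  using cinner_self_real cinner_self_nonneg by (auto intro: exI [of _ 1])

lemma cinner_Cauchy_Schwarz: "cmod (cinner x y) \<le> norm x * norm (y :: 'a::complex_inner)"
  using positive_operator.innerA_Cauchy_Schwarz [OF positive_operator_id, of x y]
  by (simp add: innerA_def normA_def norm_cinner)

lemma power2_norm_diff_real_multiple:
  fixes x y :: "'a::complex_inner"
  shows "(norm (x - scaleC (of_real s * cinner x y) y))\<^sup>2
    = (norm x)\<^sup>2 - 2 * s * (cmod (cinner x y))\<^sup>2 + s\<^sup>2 * (cmod (cinner x y))\<^sup>2 * (norm y)\<^sup>2"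
  using positive_operator.power2_normA_diff_real_multiple [OF positive_operator_id, of x s y]
  by (simp add: innerA_def normA_def norm_cinner)

lemma bounded_linear_cinner_left: "bounded_linear (\<lambda>x. cinner x y)"
proof (rule bounded_linear_intro [where K = "norm y"])
  show "cinner (scaleR r x) y = scaleR r (cinner x y)" for r x
    by (simp add: scaleR_scaleC cinner_scaleC_left scaleR_conv_of_real)
qed (simp_all add: cinner_add_left cinner_Cauchy_Schwarz)

section \<open>The projection theorem and its consequences\<close>

lemma parallelogram_law:
  fixes x y :: "'a::complex_inner"
  shows "(norm (x + y))\<^sup>2 + (norm (x - y))\<^sup>2 = 2 * (norm x)\<^sup>2 + 2 * (norm y)\<^sup>2"
proof -
  have "complex_of_real ((norm (x + y))\<^sup>2 + (norm (x - y))\<^sup>2)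
      = cinner (x + y) (x + y) + cinner (x - y) (x - y)"
    by (simp add: cinner_self)
  also have "\<dots> = 2 * cinner x x + 2 * cinner y y"
    by (simp add: cinner_add_left cinner_add_right cinner_diff_left cinner_diff_right)
  also have "\<dots> = complex_of_real (2 * (norm x)\<^sup>2 + 2 * (norm y)\<^sup>2)"
    by (simp add: cinner_self)
  finally show ?thesis
    using of_real_eq_iff by blast
qed

lemma norm_diff_le_midpoint_dist:
  fixes v a b :: "'a::complex_inner"
  assumes "d \<le> norm (v - ((1/2) *\<^sub>R a + (1/2) *\<^sub>R b))" and "0 \<le> d"
  shows "(norm (a - b))\<^sup>2 \<le> 2 * (norm (v - a))\<^sup>2 + 2 * (norm (v - b))\<^sup>2 - 4 * d\<^sup>2"
proof -
  have "(v - a) + (v - b) = 2 *\<^sub>R (v - ((1/2) *\<^sub>R a + (1/2) *\<^sub>R b))"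
    by (simp add: algebra_simps scaleR_2)
  then have "norm ((v - a) + (v - b)) = 2 * norm (v - ((1/2) *\<^sub>R a + (1/2) *\<^sub>R b))"
    by simp
  then have "2 * d \<le> norm ((v - a) + (v - b))"
    using assms(1) by linarith
  then have "(2 * d)\<^sup>2 \<le> (norm ((v - a) + (v - b)))\<^sup>2"
    by (rule power_mono) (simp add: assms(2))
  then have "4 * d\<^sup>2 \<le> (norm ((v - a) + (v - b)))\<^sup>2"
    by (simp add: power_mult_distrib)
  moreover have "(v - a) - (v - b) = b - a"
    by simp
  note parallelogram_law [of "v - a" "v - b", unfolded this]
  ultimately have "(norm (b - a))\<^sup>2 \<le> 2 * (norm (v - a))\<^sup>2 + 2 * (norm (v - b))\<^sup>2 - 4 * d\<^sup>2"
    by linarith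
  then show ?thesis
    by (simp add: norm_minus_commute)
qed

lemma Cauchy_minimizing_sequence:
  fixes m :: "nat \<Rightarrow> 'a::complex_inner"
  assumes "convex M" and m_M: "\<And>n. m n \<in> M" and d_le: "\<And>u. u \<in> M \<Longrightarrow> d \<le> norm (v - u)"
    and "0 \<le> d" and lim: "(\<lambda>n. norm (v - m n)) \<longlonglongrightarrow> d"
  shows "Cauchy m"
proof (rule CauchyI)
  fix e :: real
  assume "0 < e"
  have "(\<lambda>n. (norm (v - m n))\<^sup>2) \<longlonglongrightarrow> d\<^sup>2"
    using lim by (rule tendsto_power)
  then have "\<forall>\<^sub>F n in sequentially. (norm (v - m n))\<^sup>2 < d\<^sup>2 + e\<^sup>2 / 4"
    by (rule order_tendstoD) (use \<open>0 < e\<close> in simp)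
  then obtain N where N: "\<And>n. N \<le> n \<Longrightarrow> (norm (v - m n))\<^sup>2 < d\<^sup>2 + e\<^sup>2 / 4"
    unfolding eventually_sequentially by blast
  have "norm (m a - m b) < e" if "N \<le> a" and "N \<le> b" for a b
  proof -
    have "(1/2) *\<^sub>R m a + (1/2) *\<^sub>R m b \<in> M"
      using convexD [OF assms(1) m_M [of a] m_M [of b], of "1/2" "1/2"] by simp
    then have "(norm (m a - m b))\<^sup>2 \<le> 2 * (norm (v - m a))\<^sup>2 + 2 * (norm (v - m b))\<^sup>2 - 4 * d\<^sup>2"
      by (rule norm_diff_le_midpoint_dist [OF d_le \<open>0 \<le> d\<close>])
    also have "\<dots> < e\<^sup>2"
      using N [OF that(1)] N [OF that(2)] by linarith
    finally show ?thesis
      using \<open>0 < e\<close> by (simp add: power_less_imp_less_base)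
  qed
  then show "\<exists>N. \<forall>a\<ge>N. \<forall>b\<ge>N. norm (m a - m b) < e"
    by blast
qed

lemma nearest_point_exists:
  fixes M :: "'a::complex_hilbert set"
  assumes "convex M" and "closed M" and "M \<noteq> {}"
  shows "\<exists>m\<in>M. \<forall>u\<in>M. norm (v - m) \<le> norm (v - u)"
proof -
  define d where "d = Inf ((\<lambda>u. norm (v - u)) ` M)"
  have bdd: "bdd_below ((\<lambda>u. norm (v - u)) ` M)"
    by (rule bdd_belowI [of _ 0]) auto
  have d_le: "d \<le> norm (v - u)" if "u \<in> M" for u
    unfolding d_def using bdd that by (auto intro: cInf_lower)
  have d_nonneg: "0 \<le> d"
    unfolding d_def using assms(3) by (auto intro: cInf_greatest)
  have "\<exists>m\<in>M. norm (v - m) < d + inverse (real (Suc n))" for n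
    using cInf_less_iff [OF _ bdd, of "d + inverse (real (Suc n))"] assms(3)
    unfolding d_def by auto
  then obtain m where m_M: "\<And>n. m n \<in> M"
    and m_near: "\<And>n. norm (v - m n) < d + inverse (real (Suc n))"
    by metis
  have dist_lim: "(\<lambda>n. norm (v - m n)) \<longlonglongrightarrow> d"
  proof (rule tendsto_sandwich [OF _ _ tendsto_const LIMSEQ_inverse_real_of_nat_add])
    show "\<forall>\<^sub>F n in sequentially. d \<le> norm (v - m n)"
      using d_le m_M by (auto intro: always_eventually)
    show "\<forall>\<^sub>F n in sequentially. norm (v - m n) \<le> d + inverse (real (Suc n))"
      using m_near by (auto intro: always_eventually less_imp_le)
  qed
  have "Cauchy m"
    by (rule Cauchy_minimizing_sequence [OF assms(1) m_M d_le d_nonneg dist_lim])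
  then obtain l where l: "m \<longlonglongrightarrow> l"
    by (auto simp: Cauchy_convergent_iff convergent_def)
  have "l \<in> M"
    using closed_sequentially [OF assms(2) _ l] m_M by blast
  have "(\<lambda>n. norm (v - m n)) \<longlonglongrightarrow> norm (v - l)"
    using l by (intro tendsto_intros)
  with dist_lim have "norm (v - l) = d"
    using LIMSEQ_unique by blast
  then show ?thesis
    using \<open>l \<in> M\<close> d_le by auto
qed

lemma orthogonal_if_nearest:
  fixes w u :: "'a::complex_inner"
  assumes nearest: "\<And>t. norm w \<le> norm (w - scaleC t u)"
  shows "cinner w u = 0"
proof -
  define c where "c = cmod (cinner w u)"
  define q where "q = (norm u)\<^sup>2"
  define s where "s = 1 / (q + 1)"
  have "0 \<le> q"
    by (simp add: q_def)
  then have "0 < s" and "s * q < 1"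
    by (simp_all add: s_def field_simps)
  have "(norm w)\<^sup>2 \<le> (norm (w - scaleC (of_real s * cinner w u) u))\<^sup>2"
    using nearest [of "of_real s * cinner w u"] by (simp add: power_mono)
  also have "\<dots> = (norm w)\<^sup>2 - 2 * s * c\<^sup>2 + s\<^sup>2 * c\<^sup>2 * q"
    unfolding c_def q_def by (rule power2_norm_diff_real_multiple)
  finally have "0 \<le> s * c\<^sup>2 * (s * q - 2)"
    by (simp add: algebra_simps power2_eq_square)
  moreover have "s * q - 2 < 0"
    using \<open>s * q < 1\<close> by simp
  ultimately have "s * c\<^sup>2 \<le> 0"
    using zero_le_mult_iff [of "s * c\<^sup>2" "s * q - 2"] by linarith
  then have "c\<^sup>2 \<le> 0"
    using \<open>0 < s\<close> by (simp add: mult_le_0_iff)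
  then show ?thesis
    unfolding c_def by simp
qed

lemma orthogonal_projection_exists:
  fixes M :: "'a::complex_hilbert set"
  assumes zero: "0 \<in> M" and add: "\<And>x y. x \<in> M \<Longrightarrow> y \<in> M \<Longrightarrow> x + y \<in> M"
    and scale: "\<And>c x. x \<in> M \<Longrightarrow> scaleC c x \<in> M" and "closed M"
  shows "\<exists>m\<in>M. \<forall>u\<in>M. cinner (v - m) u = 0"
proof -
  have "convex M"
    unfolding convex_def using add scale by (simp add: scaleR_scaleC)
  then obtain m where "m \<in> M" and nearest: "\<forall>u\<in>M. norm (v - m) \<le> norm (v - u)"
    using nearest_point_exists [OF _ \<open>closed M\<close>] zero by blast
  have "cinner (v - m) u = 0" if "u \<in> M" for u
  proof (rule orthogonal_if_nearest)
    fix t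
    have "m + scaleC t u \<in> M"
      using add [OF \<open>m \<in> M\<close> scale [OF that]] .
    then show "norm (v - m) \<le> norm (v - m - scaleC t u)"
      using nearest by (simp add: diff_diff_eq)
  qed
  with \<open>m \<in> M\<close> show ?thesis
    by blast
qed

lemma cinner_orthogonal_kernel:
  fixes f :: "'a::complex_inner \<Rightarrow> complex"
  assumes f: "bounded_linear f" and f_scaleC: "\<And>c x. f (scaleC c x) = c * f x"
    and "f z \<noteq> 0" and orth: "\<And>u. f u = 0 \<Longrightarrow> cinner z u = 0"
  shows "cinner x z = f x / f z * cinner z z"
proof -
  interpret f: bounded_linear f
    by (rule f)
  have "f (x - scaleC (f x / f z) z) = 0"
    using \<open>f z \<noteq> 0\<close> by (simp add: f.diff f_scaleC)
  then have "cinner z (x - scaleC (f x / f z) z) = 0"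
    by (rule orth)
  then have "cinner (x - scaleC (f x / f z) z) z = 0"
    using cinner_conj [of "x - scaleC (f x / f z) z" z] by simp
  then show ?thesis
    by (simp add: cinner_diff_left cinner_scaleC_left)
qed

lemma riesz_representation:
  fixes f :: "'a::complex_hilbert \<Rightarrow> complex"
  assumes f: "bounded_linear f" and f_scaleC: "\<And>c x. f (scaleC c x) = c * f x"
  shows "\<exists>w. \<forall>x. f x = cinner x w"
proof -
  interpret f: bounded_linear f
    by (rule f)
  show ?thesis
  proof (cases "\<forall>x. f x = 0")
    case True
    then show ?thesis
      by (intro exI [of _ 0]) simp
  next
    case False
    then obtain x0 where "f x0 \<noteq> 0"
      by blast
    have "\<exists>m\<in>{x. f x = 0}. \<forall>u\<in>{x. f x = 0}. cinner (x0 - m) u = 0"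
    proof (rule orthogonal_projection_exists)
      show "closed {x. f x = 0}"
        using f by (intro closed_Collect_eq continuous_on_const linear_continuous_on)
    qed (simp_all add: f_scaleC f.add)
    then obtain m where "f m = 0" and orth: "\<And>u. f u = 0 \<Longrightarrow> cinner (x0 - m) u = 0"
      by blast
    define z where "z = x0 - m"
    have "f z \<noteq> 0"
      using \<open>f x0 \<noteq> 0\<close> \<open>f m = 0\<close> by (simp add: z_def f.diff)
    then have "cinner z z \<noteq> 0"
      by auto
    have coordinate: "cinner x z = f x / f z * cinner z z" for x
      using \<open>f z \<noteq> 0\<close> orth unfolding z_def by (rule cinner_orthogonal_kernel [OF f f_scaleC])
    show ?thesis
    proof (intro exI allI)
      fix x
      have "cinner x (scaleC (cnj (f z / cinner z z)) z) = f z / cinner z z * cinner x z"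
        by (simp add: cinner_scaleC_right)
      also have "\<dots> = f x"
        by (subst coordinate [of x]) (use \<open>f z \<noteq> 0\<close> \<open>cinner z z \<noteq> 0\<close> in \<open>simp add: field_simps\<close>)
      finally show "f x = cinner x (scaleC (cnj (f z / cinner z z)) z)"
        by simp
    qed
  qed
qed

lemma cinner_cadjoint:
  fixes S :: "'a::complex_hilbert \<Rightarrow> 'a"
  assumes S: "bounded_clinear S"
  shows "cinner (S x) y = cinner x (cadjoint S y)"
proof -
  have "\<forall>y. \<exists>w. \<forall>x. cinner (S x) y = cinner x w"
  proof
    fix y
    show "\<exists>w. \<forall>x. cinner (S x) y = cinner x w"
    proof (rule riesz_representation)
      show "bounded_linear (\<lambda>x. cinner (S x) y)"
        using bounded_linear_compose [OF bounded_linear_cinner_left bounded_clinear_bounded_linear [OF S]] .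
      show "cinner (S (scaleC c x)) y = c * cinner (S x) y" for c x
        using S by (simp add: bounded_clinear_scaleC cinner_scaleC_left)
    qed
  qed
  then obtain S' where "\<forall>y x. cinner (S x) y = cinner x (S' y)"
    by metis
  then have "\<exists>S'. \<forall>x y. cinner (S x) y = cinner x (S' y)"
    by blast
  then have "\<forall>x y. cinner (S x) y = cinner x (cadjoint S y)"
    unfolding cadjoint_def by (rule someI_ex)
  then show ?thesis
    by blast
qed

section \<open>A-bounded operators\<close>

definition A_bounded :: "('a::complex_inner \<Rightarrow> 'a) \<Rightarrow> ('a \<Rightarrow> 'a) \<Rightarrow> bool" where
  "A_bounded A T \<longleftrightarrow> (\<exists>c>0. \<forall>x. normA A (T x) \<le> c * normA A x)"

lemma A_bounded_comp:
  assumes "A_bounded A F" and "A_bounded A G"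
  shows "A_bounded A (F \<circ> G)"
proof -
  obtain c where "0 < c" and c: "\<And>x. normA A (F x) \<le> c * normA A x"
    using assms(1) by (auto simp: A_bounded_def)
  obtain d where "0 < d" and d: "\<And>x. normA A (G x) \<le> d * normA A x"
    using assms(2) by (auto simp: A_bounded_def)
  have "normA A (F (G x)) \<le> (c * d) * normA A x" for x
  proof -
    have "normA A (F (G x)) \<le> c * normA A (G x)"
      by (rule c)
    also have "\<dots> \<le> c * (d * normA A x)"
      using \<open>0 < c\<close> by (intro mult_left_mono d) simp
    finally show ?thesis
      by (simp add: mult.assoc)
  qed
  then show ?thesis
    unfolding A_bounded_def using \<open>0 < c\<close> \<open>0 < d\<close> by (intro exI [of _ "c * d"]) auto
qed

lemma norm_funpow_le:
  fixes R :: "'a::real_normed_vector \<Rightarrow> 'a"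
  assumes R: "\<And>x. norm (R x) \<le> r * norm x" and "0 \<le> r"
  shows "norm ((R ^^ n) x) \<le> r ^ n * norm x"
proof (induction n)
  case 0
  show ?case by simp
next
  case (Suc n)
  have "norm ((R ^^ Suc n) x) \<le> r * norm ((R ^^ n) x)"
    using R by simp
  also have "\<dots> \<le> r * (r ^ n * norm x)"
    using Suc.IH \<open>0 \<le> r\<close> by (rule mult_left_mono)
  finally show ?case
    by (simp add: mult.assoc)
qed

context positive_operator
begin

lemma normA_le_norm: "\<exists>a\<ge>0. \<forall>w. normA A w \<le> a * norm w"
proof -
  obtain K where "0 < K" and K: "\<And>x. norm (A x) \<le> norm x * K"
    using A.pos_bounded by blast
  have "normA A w \<le> sqrt K * norm w" for w
  proof -
    have "(normA A w)\<^sup>2 \<le> cmod (cinner (A w) w)"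
      using power2_normA [of w] complex_Re_le_cmod [of "cinner (A w) w"] by (simp add: innerA_def)
    also have "\<dots> \<le> norm (A w) * norm w"
      by (rule cinner_Cauchy_Schwarz)
    also have "\<dots> \<le> (norm w * K) * norm w"
      using K by (rule mult_right_mono) simp
    also have "\<dots> = (sqrt K * norm w)\<^sup>2"
      using \<open>0 < K\<close> by (simp add: power_mult_distrib power2_eq_square [of "norm w"] mult_ac)
    finally show ?thesis
      by (rule power2_le_imp_le) (use \<open>0 < K\<close> in simp)
  qed
  then show ?thesis
    using \<open>0 < K\<close> by (intro exI [of _ "sqrt K"]) auto
qed

lemma normA_le_if_unit:
  assumes T: "bounded_clinear T"
    and null: "\<And>x. normA A x = 0 \<Longrightarrow> normA A (T x) = 0"
    and unit: "\<And>z. normA A z = 1 \<Longrightarrow> normA A (T z) \<le> c"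
  shows "normA A (T x) \<le> c * normA A x"
proof (cases "normA A x = 0")
  case True
  then show ?thesis
    using null by simp
next
  case False
  then have "0 < normA A x"
    using normA_nonneg [of x] by (simp add: less_le)
  define z where "z = scaleC (of_real (1 / normA A x)) x"
  have "normA A (T z) = normA A (T x) / normA A x"
    using \<open>0 < normA A x\<close> by (simp add: z_def bounded_clinear_scaleC [OF T] normA_scaleC norm_divide abs_of_nonneg)
  moreover have "normA A z = 1"
    unfolding z_def using False by (rule normA_normalize)
  ultimately show ?thesis
    using unit [of z] \<open>0 < normA A x\<close> by (simp add: divide_le_eq)
qed

lemma A_bounded_add:
  assumes "A_bounded A F" and "A_bounded A G"
  shows "A_bounded A (\<lambda>x. F x + G x)"
proof -
  obtain c where "0 < c" and c: "\<And>x. normA A (F x) \<le> c * normA A x"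
    using assms(1) by (auto simp: A_bounded_def)
  obtain d where "0 < d" and d: "\<And>x. normA A (G x) \<le> d * normA A x"
    using assms(2) by (auto simp: A_bounded_def)
  have "normA A (F x + G x) \<le> (c + d) * normA A x" for x
    using normA_triangle_ineq [of "F x" "G x"] c [of x] d [of x] unfolding distrib_right by linarith
  then show ?thesis
    unfolding A_bounded_def using \<open>0 < c\<close> \<open>0 < d\<close> by (intro exI [of _ "c + d"]) auto
qed

lemma innerA_funpow_selfadjoint:
  assumes adj: "\<And>x y. innerA A (R x) y = innerA A x (R y)"
  shows "innerA A ((R ^^ n) x) y = innerA A x ((R ^^ n) y)"
proof (induction n arbitrary: x y)
  case 0
  show ?case by simp
next
  case (Suc n)
  have "innerA A ((R ^^ Suc n) x) y = innerA A ((R ^^ n) x) (R y)"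
    using adj by simp
  also have "\<dots> = innerA A x ((R ^^ n) (R y))"
    by (rule Suc.IH)
  also have "(R ^^ n) (R y) = (R ^^ Suc n) y"
    by (simp add: funpow_swap1)
  finally show ?case .
qed

lemma power2_normA_funpow_le:
  assumes adj: "\<And>x y. innerA A (R x) y = innerA A x (R y)"
  shows "(normA A ((R ^^ n) z))\<^sup>2 \<le> normA A ((R ^^ (n + n)) z) * normA A z"
proof -
  have "(normA A ((R ^^ n) z))\<^sup>2 = Re (innerA A ((R ^^ n) z) ((R ^^ n) z))"
    by (rule power2_normA)
  also have "\<dots> = Re (innerA A ((R ^^ n) ((R ^^ n) z)) z)"
    by (simp only: innerA_funpow_selfadjoint [OF adj])
  also have "(R ^^ n) ((R ^^ n) z) = (R ^^ (n + n)) z"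
    by (simp add: funpow_add)
  also have "Re (innerA A ((R ^^ (n + n)) z) z) \<le> cmod (innerA A ((R ^^ (n + n)) z) z)"
    by (rule complex_Re_le_cmod)
  also have "\<dots> \<le> normA A ((R ^^ (n + n)) z) * normA A z"
    by (rule innerA_Cauchy_Schwarz)
  finally show ?thesis .
qed

lemma normA_power_le_funpow:
  assumes adj: "\<And>x y. innerA A (R x) y = innerA A x (R y)" and z: "normA A z = 1"
  shows "normA A (R z) ^ (2 ^ k) \<le> normA A ((R ^^ (2 ^ k)) z)"
proof (induction k)
  case 0
  show ?case by simp
next
  case (Suc k)
  have "normA A (R z) ^ (2 ^ Suc k) = (normA A (R z) ^ (2 ^ k))\<^sup>2"
    by (simp add: power_mult [symmetric] mult.commute)
  also have "\<dots> \<le> (normA A ((R ^^ (2 ^ k)) z))\<^sup>2"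
    using Suc.IH normA_nonneg by (intro power_mono) auto
  also have "\<dots> \<le> normA A ((R ^^ (2 ^ k + 2 ^ k)) z) * normA A z"
    by (rule power2_normA_funpow_le [OF adj])
  also have "\<dots> = normA A ((R ^^ (2 ^ Suc k)) z)"
    using z by (simp add: mult_2)
  finally show ?case .
qed

lemma normA_selfadjoint_le:
  assumes adj: "\<And>x y. innerA A (R x) y = innerA A x (R y)"
    and R: "\<And>x. norm (R x) \<le> r * norm x" and "0 < r" and z: "normA A z = 1"
  shows "normA A (R z) \<le> r"
proof (rule ccontr)
  assume "\<not> normA A (R z) \<le> r"
  then have q: "1 < normA A (R z) / r"
    using \<open>0 < r\<close> by simp
  obtain a where "0 \<le> a" and a: "\<And>w. normA A w \<le> a * norm w"
    using normA_le_norm by blast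
  have bound: "(normA A (R z) / r) ^ (2 ^ k) \<le> a * norm z" for k
  proof -
    have "normA A (R z) ^ (2 ^ k) \<le> a * (r ^ (2 ^ k) * norm z)"
      using normA_power_le_funpow [OF adj z, of k] a [of "(R ^^ (2 ^ k)) z"]
        norm_funpow_le [OF R less_imp_le [OF \<open>0 < r\<close>], of "2 ^ k" z] \<open>0 \<le> a\<close>
      by (meson mult_left_mono order_trans)
    then show ?thesis
      using \<open>0 < r\<close> by (simp add: power_divide divide_le_eq mult_ac)
  qed
  obtain n where "a * norm z < (normA A (R z) / r) ^ n"
    using real_arch_pow [OF q] by blast
  moreover have "(normA A (R z) / r) ^ n \<le> (normA A (R z) / r) ^ (2 ^ n)"
    using q by (intro power_increasing) (auto intro: less_imp_le less_exp)
  ultimately show False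
    using bound [of n] by simp
qed

lemma innerA_adjoint_comp_selfadjoint:
  assumes adj: "\<And>x y. innerA A (X x) y = innerA A x (Y y)"
  shows "innerA A (Y (X x)) y = innerA A x (Y (X y))"
proof -
  have "innerA A (Y (X x)) y = cnj (innerA A y (Y (X x)))"
    by (rule innerA_commute)
  also have "\<dots> = cnj (innerA A (X y) (X x))"
    using adj [of y "X x"] by simp
  also have "\<dots> = innerA A (X x) (X y)"
    using innerA_commute [of "X x" "X y"] by simp
  also have "\<dots> = innerA A x (Y (X y))"
    by (rule adj)
  finally show ?thesis .
qed

lemma A_bounded_if_A_adjoint:
  assumes X: "bounded_clinear X" and Y: "bounded_clinear Y"
    and adj: "\<And>x y. innerA A (X x) y = innerA A x (Y y)"
  shows "A_bounded A X"
proof -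
  define R where "R = Y \<circ> X"
  have R_adj: "innerA A (R x) y = innerA A x (R y)" for x y
    unfolding R_def comp_def by (rule innerA_adjoint_comp_selfadjoint [OF adj])
  obtain r where "0 < r" and R_bound: "\<And>x. norm (R x) \<le> r * norm x"
    using bounded_linear.pos_bounded [OF bounded_clinear_bounded_linear [OF bounded_clinear_compose [OF Y X]]]
    unfolding R_def by (auto simp: mult.commute)
  have square: "(normA A (X x))\<^sup>2 \<le> normA A x * normA A (R x)" for x
  proof -
    have "(normA A (X x))\<^sup>2 = Re (innerA A x (R x))"
      unfolding R_def using power2_normA [of "X x"] adj by simp
    also have "\<dots> \<le> cmod (innerA A x (R x))"
      by (rule complex_Re_le_cmod)
    also have "\<dots> \<le> normA A x * normA A (R x)"
      by (rule innerA_Cauchy_Schwarz)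
    finally show ?thesis .
  qed
  have "normA A (X x) \<le> sqrt r * normA A x" for x
  proof (rule normA_le_if_unit [OF X])
    show "normA A (X x) = 0" if "normA A x = 0" for x
      using square [of x] that by simp
    show "normA A (X z) \<le> sqrt r" if "normA A z = 1" for z
    proof (rule real_le_rsqrt)
      have "(normA A (X z))\<^sup>2 \<le> normA A (R z)"
        using square [of z] that by simp
      also have "\<dots> \<le> r"
        by (rule normA_selfadjoint_le [OF R_adj R_bound \<open>0 < r\<close> that])
      finally show "(normA A (X z))\<^sup>2 \<le> r" .
    qed
  qed
  then show ?thesis
    unfolding A_bounded_def using \<open>0 < r\<close> by (intro exI [of _ "sqrt r"]) auto
qed

lemma A_bounded_BA:
  assumes "BA A S"
  shows "A_bounded A S"
proof -
  from assms obtain S' where "bounded_clinear S" and "bounded_clinear S'"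
    and adj: "\<And>x y. innerA A (S x) y = innerA A x (S' y)"
    unfolding BA_def by blast
  then show ?thesis
    by (rule A_bounded_if_A_adjoint)
qed

text \<open>The suprema in opnormA and omegaA are unspecified unless the sets are bounded above
(and, for the power bound below, nonempty), hence the A-boundedness hypotheses.\<close>

lemma normA_le_opnormA:
  assumes "A_bounded A T" and "normA A x = 1"
  shows "normA A (T x) \<le> opnormA A T"
proof -
  obtain c where c: "\<And>x. normA A (T x) \<le> c * normA A x"
    using assms(1) by (auto simp: A_bounded_def)
  have "normA A (T y) \<le> c" if "normA A y = 1" for y
    using c [of y] that by simp
  then have "bdd_above {normA A (T y) | y. normA A y = 1}"
    by (auto intro!: bdd_aboveI [of _ c])
  then show ?thesis
    unfolding opnormA_def using assms(2) by (auto intro: cSup_upper)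
qed

lemma cmod_innerA_le_omegaA:
  assumes "A_bounded A T" and "normA A x = 1"
  shows "cmod (innerA A (T x) x) \<le> omegaA A T"
proof -
  obtain c where c: "\<And>x. normA A (T x) \<le> c * normA A x"
    using assms(1) by (auto simp: A_bounded_def)
  have "cmod (innerA A (T y) y) \<le> c" if "normA A y = 1" for y
  proof -
    have "cmod (innerA A (T y) y) \<le> normA A (T y)"
      using innerA_Cauchy_Schwarz [of "T y" y] that by simp
    also have "\<dots> \<le> c"
      using c [of y] that by simp
    finally show ?thesis .
  qed
  then have "bdd_above {cmod (innerA A (T y) y) | y. normA A y = 1}"
    by (auto intro!: bdd_aboveI [of _ c])
  then show ?thesis
    unfolding omegaA_def using assms(2) by (auto intro: cSup_upper)
qed

lemma omegaA_power_le:
  assumes "A \<noteq> (\<lambda>x. 0)"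
    and bound: "\<And>x. normA A x = 1 \<Longrightarrow> cmod (innerA A (T x) x) ^ n \<le> M"
    and "0 < n"
  shows "omegaA A T ^ n \<le> M"
proof -
  define W where "W = {cmod (innerA A (T x) x) | x. normA A x = 1}"
  obtain x0 where "normA A x0 = 1"
    using ex_normA_eq_1 [OF assms(1)] ..
  then have w0: "cmod (innerA A (T x0) x0) \<in> W"
    unfolding W_def by blast
  then have "W \<noteq> {}"
    by blast
  have "0 \<le> M"
    using bound [OF \<open>normA A x0 = 1\<close>] by (meson norm_ge_zero order_trans zero_le_power)
  have W_le: "w \<le> root n M" if "w \<in> W" for w
  proof -
    obtain x where "normA A x = 1" and w: "w = cmod (innerA A (T x) x)"
      using \<open>w \<in> W\<close> unfolding W_def by blast
    have "w = root n (w ^ n)"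
      using \<open>0 < n\<close> w by (simp add: real_root_power_cancel)
    also have "\<dots> \<le> root n M"
      using bound [OF \<open>normA A x = 1\<close>] \<open>0 < n\<close> w by simp
    finally show ?thesis .
  qed
  have "omegaA A T \<le> root n M"
    unfolding omegaA_def W_def [symmetric] using \<open>W \<noteq> {}\<close> W_le by (rule cSup_least)
  moreover have "0 \<le> omegaA A T"
  proof -
    have "cmod (innerA A (T x0) x0) \<le> Sup W"
      by (rule cSup_upper [OF w0 bdd_aboveI [OF W_le]])
    then show ?thesis
      unfolding omegaA_def W_def [symmetric] by (meson norm_ge_zero order_trans)
  qed
  ultimately have "omegaA A T ^ n \<le> root n M ^ n"
    by (rule power_mono)
  also have "\<dots> = M"
    using \<open>0 < n\<close> \<open>0 \<le> M\<close> by simp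
  finally show ?thesis .
qed

lemma power2_normA_sum_le:
  assumes adj: "\<And>x y. innerA A (S x) y = innerA A x (T y)" and x: "normA A x = 1"
  shows "(normA A (T (S x)))\<^sup>2 + (normA A (S (T x)))\<^sup>2
    \<le> normA A (T (S (T (S x))) + S (T (S (T x))))"
proof -
  have adj': "innerA A (T x) y = innerA A x (S y)" for x y
    by (rule innerA_adjoint_swap [OF adj])
  have "(normA A (T (S x)))\<^sup>2 + (normA A (S (T x)))\<^sup>2
      = Re (innerA A x (T (S (T (S x))) + S (T (S (T x)))))"
    using power2_normA [of "T (S x)"] power2_normA [of "S (T x)"]
      adj' [of "S x" "T (S x)"] adj [of x "S (T (S x))"]
      adj [of "T x" "S (T x)"] adj' [of x "T (S (T x))"]
    by (simp add: innerA_add_right)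
  also have "\<dots> \<le> cmod (innerA A x (T (S (T (S x))) + S (T (S (T x)))))"
    by (rule complex_Re_le_cmod)
  also have "\<dots> \<le> normA A (T (S (T (S x))) + S (T (S (T x))))"
    using innerA_Cauchy_Schwarz [of x] x by simp
  finally show ?thesis .
qed

lemma cmod_innerA_power4_le:
  assumes adj: "\<And>x y. innerA A (S x) y = innerA A x (T y)" and x: "normA A x = 1"
  shows "cmod (innerA A (S x) x) ^ 4
    \<le> 1/4 * normA A (T (S (T (S x))) + S (T (S (T x))))
      + 1/2 * cmod (innerA A (T (S (S (T x)))) x)"
proof -
  have adj': "innerA A (T x) y = innerA A x (S y)" for x y
    by (rule innerA_adjoint_swap [OF adj])
  define w where "w = cmod (innerA A (S x) x)"
  have "0 \<le> w"
    by (simp add: w_def)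
  have "w \<le> normA A (S x)"
    using innerA_Cauchy_Schwarz [of "S x" x] x by (simp add: w_def)
  have "w \<le> normA A (T x)"
    using innerA_Cauchy_Schwarz [of x "T x"] x adj [of x x] by (simp add: w_def)
  have "w ^ 4 = w\<^sup>2 * w\<^sup>2"
    by (simp flip: power_add)
  also have "\<dots> \<le> (normA A (S x))\<^sup>2 * (normA A (T x))\<^sup>2"
    using \<open>0 \<le> w\<close> \<open>w \<le> normA A (S x)\<close> \<open>w \<le> normA A (T x)\<close>
    by (intro mult_mono power_mono) auto
  also have "\<dots> = cmod (innerA A (T (S x)) x * innerA A x (S (T x)))"
  proof -
    have "innerA A (T (S x)) x = of_real ((normA A (S x))\<^sup>2)"
      using adj' [of "S x" x] innerA_self [of "S x"] by simp
    moreover have "innerA A x (S (T x)) = of_real ((normA A (T x))\<^sup>2)"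
      using adj' [of x "T x"] innerA_self [of "T x"] by simp
    ultimately show ?thesis
      by (simp add: norm_mult norm_power)
  qed
  also have "\<dots> \<le> (normA A (T (S x)) * normA A (S (T x)) + cmod (innerA A (T (S x)) (S (T x)))) / 2"
    using buzano_inequality [OF x, of "T (S x)" "S (T x)"] by simp
  also have "normA A (T (S x)) * normA A (S (T x))
      \<le> ((normA A (T (S x)))\<^sup>2 + (normA A (S (T x)))\<^sup>2) / 2"
    using sum_squares_bound [of "normA A (T (S x))" "normA A (S (T x))"] by (simp add: field_simps)
  also have "(normA A (T (S x)))\<^sup>2 + (normA A (S (T x)))\<^sup>2
      \<le> normA A (T (S (T (S x))) + S (T (S (T x))))"
    by (rule power2_normA_sum_le [OF adj x])
  also have "cmod (innerA A (T (S x)) (S (T x))) = cmod (innerA A (T (S (S (T x)))) x)"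
    using adj' [of "S x" "S (T x)"] innerA_commute [of "S x" "S (S (T x))"]
      adj' [of "S (S (T x))" x] by simp
  finally show ?thesis
    unfolding w_def by simp
qed

lemma omegaA_power4_le:
  assumes "A \<noteq> (\<lambda>x. 0)" and adj: "\<And>x y. innerA A (S x) y = innerA A x (T y)"
    and S: "A_bounded A S" and T: "A_bounded A T"
  shows "omegaA A S ^ 4 \<le> 1/4 * opnormA A (\<lambda>x. (T \<circ> S \<circ> T \<circ> S) x + (S \<circ> T \<circ> S \<circ> T) x)
    + 1/2 * omegaA A (T \<circ> S \<circ> S \<circ> T)"
proof (rule omegaA_power_le [OF assms(1)])
  fix x
  assume x: "normA A x = 1"
  have "A_bounded A (\<lambda>x. (T \<circ> S \<circ> T \<circ> S) x + (S \<circ> T \<circ> S \<circ> T) x)"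
    using S T by (intro A_bounded_add A_bounded_comp)
  from normA_le_opnormA [OF this x]
  have "normA A (T (S (T (S x))) + S (T (S (T x))))
      \<le> opnormA A (\<lambda>x. (T \<circ> S \<circ> T \<circ> S) x + (S \<circ> T \<circ> S \<circ> T) x)"
    by simp
  moreover have "A_bounded A (T \<circ> S \<circ> S \<circ> T)"
    using S T by (intro A_bounded_comp)
  from cmod_innerA_le_omegaA [OF this x]
  have "cmod (innerA A (T (S (S (T x)))) x) \<le> omegaA A (T \<circ> S \<circ> S \<circ> T)"
    by simp
  ultimately show "cmod (innerA A (S x) x) ^ 4 \<le> 1/4 * opnormA A (\<lambda>x. (T \<circ> S \<circ> T \<circ> S) x
      + (S \<circ> T \<circ> S \<circ> T) x) + 1/2 * omegaA A (T \<circ> S \<circ> S \<circ> T)"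
    using cmod_innerA_power4_le [OF adj x] by linarith
qed simp

end

section \<open>The A-adjoint in a Hilbert space\<close>

context positive_operator
begin

lemma mp_inv_conditions_unique:
  assumes "\<forall>z. A z = 0 \<longrightarrow> cinner x1 z = 0" and "\<forall>w. cinner (A x1 - y) (A w) = 0"
    and "\<forall>z. A z = 0 \<longrightarrow> cinner x2 z = 0" and "\<forall>w. cinner (A x2 - y) (A w) = 0"
  shows "x1 = x2"
proof -
  have "cinner (A (x1 - x2)) (A w) = 0" for w
  proof -
    have "cinner (A (x1 - x2)) (A w) = cinner (A x1 - y) (A w) - cinner (A x2 - y) (A w)"
      by (simp add: A.diff cinner_diff_left)
    then show ?thesis
      using assms(2,4) by simp
  qed
  then have "A (x1 - x2) = 0"
    using cinner_self_eq_0 by blast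
  then have "cinner x1 (x1 - x2) = 0" and "cinner x2 (x1 - x2) = 0"
    using assms(1,3) by auto
  then have "cinner (x1 - x2) (x1 - x2) = 0"
    by (simp add: cinner_diff_left)
  then show ?thesis
    by simp
qed

end

locale hilbert_positive_operator = positive_operator A for A :: "'a::complex_hilbert \<Rightarrow> 'a"
begin

lemma A_mp_inv_A: "A (mp_inv A (A w)) = A w"
proof -
  define Q where "Q x \<longleftrightarrow> (\<forall>z. A z = 0 \<longrightarrow> cinner x z = 0) \<and> (\<forall>w'. cinner (A x - A w) (A w') = 0)"
    for x
  have "\<exists>m\<in>{x. A x = 0}. \<forall>u\<in>{x. A x = 0}. cinner (w - m) u = 0"
  proof (rule orthogonal_projection_exists)
    show "closed {x. A x = 0}"
      by (intro closed_Collect_eq continuous_on_const linear_continuous_on bounded_linear_A)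
  qed (simp_all add: A.add A_scaleC)
  then obtain m where "A m = 0" and "\<And>z. A z = 0 \<Longrightarrow> cinner (w - m) z = 0"
    by blast
  then have "Q (w - m)"
    unfolding Q_def by (simp add: A.diff)
  moreover have "x1 = x2" if "Q x1" and "Q x2" for x1 x2
    using mp_inv_conditions_unique [of x1 "A w" x2] that unfolding Q_def by blast
  ultimately have "\<exists>!x. Q x"
    by blast
  then have "Q (THE x. Q x)"
    by (rule theI')
  then have "Q (mp_inv A (A w))"
    by (simp add: mp_inv_def Q_def)
  then have "cinner (A (mp_inv A (A w)) - A w) (A (mp_inv A (A w) - w)) = 0"
    unfolding Q_def by blast
  then show ?thesis
    by (simp add: A.diff)
qed

lemma A_sharpA:
  assumes S: "bounded_clinear S" and adj: "\<And>x y. innerA A (S x) y = innerA A x (S' y)"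
  shows "A (sharpA A S y) = A (S' y)"
proof -
  have "cadjoint S (A y) = A (S' y)"
  proof (rule cinner_eqI)
    fix x
    have "cinner x (cadjoint S (A y)) = cinner (A (S x)) y"
      by (simp add: cinner_cadjoint [OF S] selfadjoint)
    also have "\<dots> = innerA A x (S' y)"
      using adj [of x y] by (simp add: innerA_def)
    also have "\<dots> = cinner x (A (S' y))"
      by (simp add: innerA_def selfadjoint)
    finally show "cinner x (cadjoint S (A y)) = cinner x (A (S' y))" .
  qed
  then show ?thesis
    by (simp add: sharpA_def A_mp_inv_A)
qed

lemma innerA_sharpA:
  assumes "BA A S"
  shows "innerA A (S x) y = innerA A x (sharpA A S y)"
proof -
  from assms obtain S' where S: "bounded_clinear S"
    and adj: "\<And>x y. innerA A (S x) y = innerA A x (S' y)"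
    unfolding BA_def by blast
  show ?thesis
    using adj [of x y] innerA_right_cong [OF A_sharpA [OF S adj]] by simp
qed

lemma A_bounded_sharpA:
  assumes "BA A S"
  shows "A_bounded A (sharpA A S)"
proof -
  from assms obtain S' where S: "bounded_clinear S" and S': "bounded_clinear S'"
    and adj: "\<And>x y. innerA A (S x) y = innerA A x (S' y)"
    unfolding BA_def by blast
  have "A_bounded A S'"
    by (rule A_bounded_if_A_adjoint [OF S' S innerA_adjoint_swap [OF adj]])
  moreover have "normA A (sharpA A S y) = normA A (S' y)" for y
    by (rule normA_cong [OF A_sharpA [OF S adj]])
  ultimately show ?thesis
    by (simp add: A_bounded_def)
qed

end

theorem corollary3p11:
  fixes A S :: "'a::complex_hilbert \<Rightarrow> 'a"
  assumes "positive_op A" and "A \<noteq> (\<lambda>x. 0)" and "BA A S"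
  shows "omegaA A S ^ 4 \<le>
    1/4 * opnormA A (\<lambda>x. (sharpA A S \<circ> S \<circ> sharpA A S \<circ> S) x + (S \<circ> sharpA A S \<circ> S \<circ> sharpA A S) x)
    + 1/2 * omegaA A (sharpA A S \<circ> S \<circ> S \<circ> sharpA A S)"
proof -
  interpret hilbert_positive_operator A
    by unfold_locales (rule assms(1))
  show ?thesis
  proof (rule omegaA_power4_le [OF assms(2)])
    show "innerA A (S x) y = innerA A x (sharpA A S y)" for x y
      using assms(3) by (rule innerA_sharpA)
    show "A_bounded A S"
      using assms(3) by (rule A_bounded_BA)
    show "A_bounded A (sharpA A S)"
      using assms(3) by (rule A_bounded_sharpA)
  qed
qed

end
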